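(* Let $q_1,q_2$ be coprime positive integers, $Q=q_1q_2$, let $V:\mathbb{Z}^2\to\mathbb{R}$ be $(q_1,q_2)$-periodic, and let $\lambda_*\in\mathbb{C}$. Let $N\subset\mathbb{R}^2$ be the quadrilateral with vertices $(q_2,0)$, $(0,q_1)$, $(-q_2,0)$, $(0,-q_1)$. Then $N$ contains every exponent vector of the Laurent polynomial $z_1\frac{\partial}{\partial z_1}\mathcal{P}(z,\lambda_* )$.
   Context: $V$ is $(q_1,q_2)$-periodic if $V(n_1,n_2)=V(n_1+q_1,n_2)=V(n_1,n_2+q_2)$ for all $(n_1,n_2)\in\mathbb{Z}^2$. The operator $\Delta+V$ acts on $u:\mathbb{Z}^2\to\mathbb{C}$ by $((\Delta+V)u)(n)=u(n_1+1,n_2)+u(n_1-1,n_2)+u(n_1,n_2+1)+u(n_1,n_2-1)+V(n)u(n)$. For $z=(z_1,z_2)\in(\mathbb{C}\setminus\{0\})^2$, $\mathcal{D}_V(z)$ is the $Q\times Q$ matrix of $\Delta+V$ acting on the space of functions $u$ with $u(n_1+q_1,n_2)=z_1u(n)$ and $u(n_1,n_2+q_2)=z_2u(n)$ for all $n$, in the coordinates $\{u(n_1,n_2):1\le n_1\le q_1,1\le n_2\le q_2\}$, and $\mathcal{P}(z,\lambda)=\det(\mathcal{D}_V(z)-\lambda I)$, a Laurent polynomial in $z$. An exponent vector of a Laurent polynomial $\sum_i c_iz^{e_i}$ is an $e_i\in\mathbb{Z}^2$ with $c_i\neq 0$. *)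

theory Defs
  imports "HOL-Analysis.Analysis" "HOL-Library.Poly_Mapping" "Jordan_Normal_Form.Determinant"
begin

text \<open>Laurent polynomials in z = (z1,z2) with complex coefficients are modelled as
finitely supported coefficient maps (int x int) =>0 complex; the exponent (a,b)
stands for the monomial z1^a z2^b, multiplication is convolution (a commutative ring).
The exponent vectors of a Laurent polynomial p are exactly keys p.\<close>

type_synonym laurent2 = "(int \<times> int) \<Rightarrow>\<^sub>0 complex"

definition lmono :: "int \<times> int \<Rightarrow> laurent2" where
  "lmono e = Poly_Mapping.single e 1"

definition lconst :: "complex \<Rightarrow> laurent2" where
  "lconst c = Poly_Mapping.single (0,0) c"

definition z1_dz1 :: "laurent2 \<Rightarrow> laurent2" where
  "z1_dz1 p = Poly_Mapping.mapp (\<lambda>e c. of_int (fst e) * c) p"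

definition periodic2 :: "nat \<Rightarrow> nat \<Rightarrow> (int \<times> int \<Rightarrow> real) \<Rightarrow> bool" where
  "periodic2 q1 q2 V \<longleftrightarrow> (\<forall>n1 n2. V (n1,n2) = V (n1 + int q1, n2) \<and> V (n1,n2) = V (n1, n2 + int q2))"

definition site :: "nat \<Rightarrow> nat \<Rightarrow> (int \<times> int)" where
  "site q1 k = (int (k mod q1) + 1, int (k div q1) + 1)"

text \<open>Reduction of a lattice point n into the fundamental domain: n = red n + (k1 q1, k2 q2),
with red n in {1..q1} \<times> {1..q2} and shift n = (k1,k2).\<close>
definition red :: "nat \<Rightarrow> nat \<Rightarrow> int \<times> int \<Rightarrow> int \<times> int" where
  "red q1 q2 n = ((fst n - 1) mod int q1 + 1, (snd n - 1) mod int q2 + 1)"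

definition shift :: "nat \<Rightarrow> nat \<Rightarrow> int \<times> int \<Rightarrow> int \<times> int" where
  "shift q1 q2 n = ((fst n - 1) div int q1, (snd n - 1) div int q2)"

text \<open>Matrix entry of \<Delta>+V on the space of u with u(n+(q1,0)) = z1 u(n), u(n+(0,q2)) = z2 u(n):
((\<Delta>+V)u)(n) = \<Sum>_{d} u(n+d) + V(n) u(n), and u(n+d) = z^{shift(n+d)} u(red(n+d)).\<close>
definition DV_entry :: "nat \<Rightarrow> nat \<Rightarrow> (int \<times> int \<Rightarrow> real) \<Rightarrow> int \<times> int \<Rightarrow> int \<times> int \<Rightarrow> laurent2" where
  "DV_entry q1 q2 V n m =
     (\<Sum>d\<leftarrow>[(1,0),(-1,0),(0,1),(0,-1)].
        if red q1 q2 (n + d) = m then lmono (shift q1 q2 (n + d)) else 0)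
     + (if n = m then lconst (complex_of_real (V n)) else 0)"

definition DV :: "nat \<Rightarrow> nat \<Rightarrow> (int \<times> int \<Rightarrow> real) \<Rightarrow> laurent2 mat" where
  "DV q1 q2 V = Matrix.mat (q1*q2) (q1*q2) (\<lambda>(i,j). DV_entry q1 q2 V (site q1 i) (site q1 j))"

definition charP :: "nat \<Rightarrow> nat \<Rightarrow> (int \<times> int \<Rightarrow> real) \<Rightarrow> complex \<Rightarrow> laurent2" where
  "charP q1 q2 V lam = Determinant.det (DV q1 q2 V - lconst lam \<cdot>\<^sub>m 1\<^sub>m (q1*q2))"

definition quadN :: "nat \<Rightarrow> nat \<Rightarrow> (real \<times> real) set" where
  "quadN q1 q2 = convex hull {(real q2, 0), (0, real q1), (- real q2, 0), (0, - real q1)}"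

end

theory Submission
  imports Defs
begin

text \<open>In the Leibniz expansion of \<open>det (D_V(z) - \<lambda> I)\<close> every monomial is a product of one
entry from each row, the entry of row \<open>i\<close> being taken in column \<open>p i\<close> for a permutation \<open>p\<close>.
The entry indexed by the sites \<open>n\<close>, \<open>m\<close> only contains monomials \<open>z^e\<close> with
\<open>n + d = m + (q1 e1, q2 e2)\<close> for a step \<open>d\<close> with \<open>|d1| + |d2| \<le> 1\<close>. Summed along a permutation
the sites cancel, so \<open>(q1 e1, q2 e2)\<close> is a sum of \<open>Q\<close> such steps, whence
\<open>q1 |e1| + q2 |e2| \<le> Q\<close>, which is the inequality describing \<open>N\<close>. The operator \<open>z1 \<partial>/\<partial>z1\<close>
creates no new exponents.\<close>

lemma keys_sum_list_subset:
  "Poly_Mapping.keys (sum_list xs) \<subseteq> (\<Union>x \<in> set xs. Poly_Mapping.keys x)"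
  by (induction xs) (use Poly_Mapping.keys_add in fastforce)+

lemma keys_prod_subset:
  fixes f :: "'i \<Rightarrow> ('a::comm_monoid_add \<Rightarrow>\<^sub>0 'b::comm_semiring_1)"
  assumes "finite I"
  shows "Poly_Mapping.keys (prod f I) \<subseteq> {sum g I | g. \<forall>i\<in>I. g i \<in> Poly_Mapping.keys (f i)}"
  using assms
proof (induction I rule: finite_induct)
  case empty
  then show ?case by simp
next
  case (insert x F)
  show ?case
  proof
    fix e assume "e \<in> Poly_Mapping.keys (prod f (insert x F))"
    then have "e \<in> Poly_Mapping.keys (f x * prod f F)"
      using insert.hyps by simp
    then obtain a b where e: "e = a + b" and a: "a \<in> Poly_Mapping.keys (f x)"
      and b: "b \<in> Poly_Mapping.keys (prod f F)"
      using Poly_Mapping.keys_mult by blast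
    from b obtain g where g: "b = sum g F" "\<forall>i\<in>F. g i \<in> Poly_Mapping.keys (f i)"
      using insert.IH by blast
    define g' where "g' = g(x := a)"
    have "sum g' F = sum g F"
      using insert.hyps by (intro sum.cong) (auto simp: g'_def)
    then have "e = sum g' (insert x F)"
      using insert.hyps e g by (simp add: g'_def)
    moreover have "\<forall>i\<in>insert x F. g' i \<in> Poly_Mapping.keys (f i)"
      using a g by (simp add: g'_def)
    ultimately show "e \<in> {sum g (insert x F) | g. \<forall>i\<in>insert x F. g i \<in> Poly_Mapping.keys (f i)}"
      by blast
  qed
qed

lemma keys_det_subset:
  fixes A :: "('a::comm_monoid_add \<Rightarrow>\<^sub>0 'b::comm_ring_1) mat"
  assumes "A \<in> carrier_mat n n"
  shows "Poly_Mapping.keys (det A) \<subseteq> {sum g {0..<n} | g p. p permutes {0..<n} \<and>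
            (\<forall>i<n. g i \<in> Poly_Mapping.keys (A $$ (i, p i)))}"
proof
  fix e assume "e \<in> Poly_Mapping.keys (det A)"
  then obtain p where p: "p permutes {0..<n}"
    and "e \<in> Poly_Mapping.keys (signof p * (\<Prod>i = 0..<n. A $$ (i, p i)))"
    using Poly_Mapping.keys_sum[of "\<lambda>p. signof p * (\<Prod>i = 0..<n. A $$ (i, p i))"]
    unfolding det_def'[OF assms] by blast
  then have "e \<in> Poly_Mapping.keys (\<Prod>i = 0..<n. A $$ (i, p i))"
    by (cases "evenperm p") (simp_all add: sign_def)
  then show "e \<in> {sum g {0..<n} | g p. p permutes {0..<n} \<and> (\<forall>i<n. g i \<in> Poly_Mapping.keys (A $$ (i, p i)))}"
    using keys_prod_subset[of "{0..<n}" "\<lambda>i. A $$ (i, p i)"] p by fastforce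
qed

lemma sum_permutes_telescope:
  fixes s d v :: "'i \<Rightarrow> 'a::ab_group_add"
  assumes "p permutes I" and "\<And>i. i \<in> I \<Longrightarrow> s i + d i = s (p i) + v i"
  shows "sum v I = sum d I"
proof -
  have "sum v I = (\<Sum>i\<in>I. s i + d i - s (p i))"
    using assms(2) by (intro sum.cong) (auto simp: algebra_simps)
  also have "\<dots> = sum d I"
    using sum.permute[OF assms(1), of s] by (simp add: sum.distrib sum_subtractf)
  finally show ?thesis .
qed

definition period_vec :: "nat \<Rightarrow> nat \<Rightarrow> int \<times> int \<Rightarrow> int \<times> int" where
  "period_vec q1 q2 e = (int q1 * fst e, int q2 * snd e)"

lemma period_vec_sum: "period_vec q1 q2 (sum g I) = (\<Sum>i\<in>I. period_vec q1 q2 (g i))"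
  by (simp add: period_vec_def fst_sum snd_sum sum_distrib_left prod_eq_iff)

lemma red_plus_period_vec_shift: "red q1 q2 n + period_vec q1 q2 (shift q1 q2 n) = n"
  by (simp add: red_def shift_def period_vec_def prod_eq_iff algebra_simps)

lemma keys_DV_entry:
  assumes "e \<in> Poly_Mapping.keys (DV_entry q1 q2 V n m)"
  shows "\<exists>d. \<bar>fst d\<bar> + \<bar>snd d\<bar> \<le> 1 \<and> n + d = m + period_vec q1 q2 e"
proof -
  define hop where "hop = (\<lambda>d. if red q1 q2 (n + d) = m then lmono (shift q1 q2 (n + d)) else 0)"
  define dirs :: "(int \<times> int) list" where "dirs = [(1,0),(-1,0),(0,1),(0,-1)]"
  define diag where "diag = (if n = m then lconst (complex_of_real (V n)) else 0)"
  have "DV_entry q1 q2 V n m = sum_list (map hop dirs) + diag"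
    unfolding DV_entry_def hop_def dirs_def diag_def ..
  then have "e \<in> Poly_Mapping.keys (sum_list (map hop dirs)) \<or> e \<in> Poly_Mapping.keys diag"
    using assms Poly_Mapping.keys_add[of "sum_list (map hop dirs)" diag] by auto
  then consider d where "d \<in> set dirs" "e \<in> Poly_Mapping.keys (hop d)"
    | "e \<in> Poly_Mapping.keys diag"
    using keys_sum_list_subset[of "map hop dirs"] by auto
  then show ?thesis
  proof cases
    case 1
    then have "red q1 q2 (n + d) = m" "e = shift q1 q2 (n + d)"
      by (simp_all add: hop_def lmono_def split: if_splits)
    then show ?thesis
      using 1 red_plus_period_vec_shift[of q1 q2 "n + d"] by (intro exI[of _ d]) (auto simp: dirs_def)
  next
    case 2
    then have "n = m" "e = (0,0)"
      by (simp_all add: diag_def lconst_def split: if_splits)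
    then show ?thesis
      by (intro exI[of _ 0]) (simp add: period_vec_def zero_prod_def)
  qed
qed

lemma charP_exponent_bound:
  assumes "e \<in> Poly_Mapping.keys (charP q1 q2 V lam)"
  shows "int q1 * \<bar>fst e\<bar> + int q2 * \<bar>snd e\<bar> \<le> int q1 * int q2"
proof -
  define Q where "Q = q1 * q2"
  define M where "M = DV q1 q2 V - lconst lam \<cdot>\<^sub>m 1\<^sub>m Q"
  have M: "M \<in> carrier_mat Q Q"
    unfolding M_def DV_def Q_def by (intro minus_carrier_mat smult_carrier_mat one_carrier_mat)
  have M_entry: "M $$ (i, j) = DV_entry q1 q2 V (site q1 i) (site q1 j) - (if i = j then lconst lam else 0)"
    if "i < Q" "j < Q" for i j
    using that by (simp add: M_def DV_def Q_def)
  obtain g p where e: "e = sum g {0..<Q}" and p: "p permutes {0..<Q}"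
    and g: "\<And>i. i < Q \<Longrightarrow> g i \<in> Poly_Mapping.keys (M $$ (i, p i))"
    using keys_det_subset[OF M] assms unfolding charP_def M_def Q_def by blast
  have "\<exists>d. \<bar>fst d\<bar> + \<bar>snd d\<bar> \<le> 1 \<and> site q1 i + d = site q1 (p i) + period_vec q1 q2 (g i)"
    if "i < Q" for i
  proof -
    have "p i < Q"
      using p that by (simp add: permutes_in_image)
    then have "g i \<in> Poly_Mapping.keys (DV_entry q1 q2 V (site q1 i) (site q1 (p i)))
        \<or> (i = p i \<and> g i = (0,0))"
      using g[OF that] M_entry[OF that] Poly_Mapping.keys_diff
      by (fastforce simp: lconst_def split: if_splits)
    then show ?thesis
    proof
      assume "i = p i \<and> g i = (0, 0)"
      then show ?thesis
        by (intro exI[of _ 0]) (simp add: period_vec_def zero_prod_def)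
    qed (rule keys_DV_entry)
  qed
  then obtain d where d_norm: "\<And>i. i < Q \<Longrightarrow> \<bar>fst (d i)\<bar> + \<bar>snd (d i)\<bar> \<le> 1"
    and d_hop: "\<And>i. i < Q \<Longrightarrow> site q1 i + d i = site q1 (p i) + period_vec q1 q2 (g i)"
    by metis
  have telescope: "period_vec q1 q2 e = sum d {0..<Q}"
    unfolding e period_vec_sum using p d_hop by (rule sum_permutes_telescope) simp
  have "int q1 * \<bar>fst e\<bar> + int q2 * \<bar>snd e\<bar> = \<bar>fst (period_vec q1 q2 e)\<bar> + \<bar>snd (period_vec q1 q2 e)\<bar>"
    by (simp add: period_vec_def abs_mult)
  also have "\<dots> = \<bar>\<Sum>i = 0..<Q. fst (d i)\<bar> + \<bar>\<Sum>i = 0..<Q. snd (d i)\<bar>"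
    unfolding telescope by (simp add: fst_sum snd_sum)
  also have "\<dots> \<le> (\<Sum>i = 0..<Q. \<bar>fst (d i)\<bar> + \<bar>snd (d i)\<bar>)"
    unfolding sum.distrib by (intro add_mono sum_abs)
  also have "\<dots> \<le> (\<Sum>i = 0..<Q. 1)"
    using d_norm by (intro sum_mono) simp
  also have "\<dots> = int q1 * int q2"
    by (simp add: Q_def)
  finally show ?thesis .
qed

lemma mem_convex_hull_rhombus:
  fixes A B x y :: real
  assumes "A > 0" "B > 0" "A * \<bar>x\<bar> + B * \<bar>y\<bar> \<le> A * B"
  shows "(x, y) \<in> convex hull {(B, 0), (0, A), (- B, 0), (0, - A)}"
proof -
  let ?S = "{(B, 0), (0, A), (- B, 0), (0, - A)}"
  define u :: "real \<times> real" where "u = (if x \<ge> 0 then (B, 0) else (- B, 0))"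
  define v :: "real \<times> real" where "v = (if y \<ge> 0 then (0, A) else (0, - A))"
  define s where "s = \<bar>x\<bar> / B"
  define t where "t = \<bar>y\<bar> / A"
  have "(0, 0) = (1/2) *\<^sub>R (B, 0) + (1/2) *\<^sub>R (- B, 0)"
    by simp
  also have "\<dots> \<in> convex hull ?S"
    by (rule convexD[OF convex_convex_hull]) (auto intro: hull_inc)
  finally have "convex hull {u, v, (0, 0)} \<subseteq> convex hull ?S"
    unfolding u_def v_def by (intro convex_hull_subset) (auto intro: hull_inc)
  moreover have "(x, y) \<in> convex hull {u, v, (0, 0)}"
  proof -
    have "s + t = (A * \<bar>x\<bar> + B * \<bar>y\<bar>) / (A * B)"
      unfolding s_def t_def using assms by (simp add: field_simps)
    then have "s + t \<le> 1"
      using assms by simp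
    moreover have "(x, y) = s *\<^sub>R u + t *\<^sub>R v + (1 - s - t) *\<^sub>R (0, 0)"
      unfolding s_def t_def u_def v_def using assms by (auto simp: field_simps)
    ultimately show ?thesis
      unfolding convex_hull_3 using assms
      by (intro CollectI exI[of _ s] exI[of _ t] exI[of _ "1 - s - t"]) (auto simp: s_def t_def)
  qed
  ultimately show ?thesis
    by (rule subsetD)
qed

theorem corollary4p5:
  fixes q1 q2 :: nat and V :: "int \<times> int \<Rightarrow> real" and lam :: complex
  assumes "q1 > 0" and "q2 > 0" and "coprime q1 q2"
    and "periodic2 q1 q2 V"
  shows "\<forall>e \<in> Poly_Mapping.keys (z1_dz1 (charP q1 q2 V lam)).
           (real_of_int (fst e), real_of_int (snd e)) \<in> quadN q1 q2"
proof
  fix e assume "e \<in> Poly_Mapping.keys (z1_dz1 (charP q1 q2 V lam))"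
  then have "e \<in> Poly_Mapping.keys (charP q1 q2 V lam)"
    unfolding z1_dz1_def by (rule subsetD[OF keys_mapp_subset])
  then have "int q1 * \<bar>fst e\<bar> + int q2 * \<bar>snd e\<bar> \<le> int q1 * int q2"
    by (rule charP_exponent_bound)
  then have "real q1 * \<bar>real_of_int (fst e)\<bar> + real q2 * \<bar>real_of_int (snd e)\<bar> \<le> real q1 * real q2"
    unfolding of_int_le_iff[where 'a=real, symmetric] by simp
  then show "(real_of_int (fst e), real_of_int (snd e)) \<in> quadN q1 q2"
    unfolding quadN_def using assms(1,2) by (intro mem_convex_hull_rhombus) simp_all
qed

end
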